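(* Let $R\ge1$ and let $\mathbb{G}_1,\dots,\mathbb{G}_R$ be linear arrays whose difference coarrays $\mathbb{D}_{\mathbb{G}_1},\dots,\mathbb{D}_{\mathbb{G}_R}$ are all hole-free. Let $\mathbb{M}_r$ ($0\le r\le R$) be the multi-generator fractal array built from them. Then for every $1\le r\le R$ the difference coarray $\mathbb{D}_r$ of $\mathbb{M}_r$ is hole-free and $$\mathbb{D}_r=\left[-\tfrac{P_r-1}{2},\tfrac{P_r-1}{2}\right]\cap\mathbb{Z},\qquad P_r=\prod_{i=1}^r|\mathbb{D}_{\mathbb{G}_i}|.$$
   Context: A linear array is a finite set $\mathbb{G}\subset\mathbb{Z}$ with $\min\mathbb{G}=0$; its difference coarray is $\mathbb{D}=\{n_1-n_2:n_1,n_2\in\mathbb{G}\}$; its central ULA is the largest set $\{-m,\dots,m\}$ ($m\ge0$) contained in $\mathbb{D}$; $\mathbb{D}$ is hole-free if it equals its central ULA. Given generators $\mathbb{G}_1,\dots,\mathbb{G}_R$ with central ULAs $\mathbb{U}_{\mathbb{G}_i}$, the multi-generator fractal array is defined by $\mathbb{M}_0=\{0\}$ and $\mathbb{M}_{r+1}=\bigcup_{n\in\mathbb{G}_{r+1}}\big(\mathbb{M}_r+n\prod_{i=1}^{r}|\mathbb{U}_{\mathbb{G}_i}|\big)$ for $0\le r\le R-1$ (empty product $=1$), where $A+t=\{a+t:a\in A\}$. *)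

theory Defs
  imports Main
begin

definition linear_array :: "int set \<Rightarrow> bool" where
  "linear_array G \<longleftrightarrow> finite G \<and> G \<noteq> {} \<and> Min G = 0"

definition diff_coarray :: "int set \<Rightarrow> int set" where
  "diff_coarray G = {n1 - n2 | n1 n2. n1 \<in> G \<and> n2 \<in> G}"

definition central_ula :: "int set \<Rightarrow> int set" where
  "central_ula D = {- int (GREATEST m::nat. {- int m..int m} \<subseteq> D) .. int (GREATEST m::nat. {- int m..int m} \<subseteq> D)}"

definition hole_free :: "int set \<Rightarrow> bool" where
  "hole_free D \<longleftrightarrow> D = central_ula D"

definition shift :: "int set \<Rightarrow> int \<Rightarrow> int set" where
  "shift A t = (\<lambda>a. a + t) ` A"

fun fractal :: "(nat \<Rightarrow> int set) \<Rightarrow> nat \<Rightarrow> int set" where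
  "fractal G 0 = {0}"
| "fractal G (Suc r) =
     (\<Union>n\<in>G (Suc r). shift (fractal G r)
        (n * (\<Prod>i=1..r. int (card (central_ula (diff_coarray (G i)))))))"

end

theory Submission
  imports Defs
begin

text \<open>If the generator coarrays are \<open>{-m\<^sub>i..m\<^sub>i}\<close>, induct on \<open>r\<close> with
  \<open>\<D>\<^sub>r = {-h..h}\<close> and \<open>P\<^sub>r = 2h+1\<close>. Each element of \<open>\<D>\<^sub>r\<^sub>+\<^sub>1\<close> has the form
  \<open>d + e P\<^sub>r\<close> with \<open>d \<in> \<D>\<^sub>r\<close> and \<open>e \<in> \<D>\<^bsub>G\<^sub>r\<^sub>+\<^sub>1\<^esub>\<close>; since the digit \<open>d\<close> ranges over a full
  balanced residue system modulo \<open>P\<^sub>r\<close>, these sums fill exactly the interval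
  \<open>{-(h + m P\<^sub>r)..h + m P\<^sub>r}\<close>, whose size is \<open>(2m+1) P\<^sub>r = P\<^sub>r\<^sub>+\<^sub>1\<close>.\<close>

lemma hole_free_symmetric_interval:
  fixes h :: int
  assumes "0 \<le> h"
  shows "hole_free {-h..h}"
proof -
  have "(GREATEST m::nat. {- int m..int m} \<subseteq> {-h..h}) = nat h"
  proof (rule Greatest_equality)
    fix y :: nat
    assume "{- int y..int y} \<subseteq> {-h..h}"
    then have "int y \<in> {-h..h}" by auto
    then show "y \<le> nat h" by auto
  qed (use assms in simp)
  then show ?thesis
    unfolding hole_free_def central_ula_def using assms by simp
qed

lemma hole_free_imp_symmetric_interval:
  assumes "hole_free D"
  obtains k :: int where "0 \<le> k" and "D = {-k..k}"
proof
  show "0 \<le> int (GREATEST m::nat. {- int m..int m} \<subseteq> D)" by simp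
  show "D = {- int (GREATEST m::nat. {- int m..int m} \<subseteq> D)..int (GREATEST m::nat. {- int m..int m} \<subseteq> D)}"
    using assms unfolding hole_free_def central_ula_def .
qed

lemma diff_coarrayI: "a \<in> G \<Longrightarrow> b \<in> G \<Longrightarrow> a - b \<in> diff_coarray G"
  unfolding diff_coarray_def by blast

lemma diff_coarrayE:
  assumes "x \<in> diff_coarray G"
  obtains a b where "a \<in> G" "b \<in> G" "x = a - b"
  using assms unfolding diff_coarray_def by blast

lemma diff_coarray_singleton: "diff_coarray {a} = {0}"
  unfolding diff_coarray_def by auto

lemma diff_coarray_UN_shift:
  "diff_coarray (\<Union>n\<in>G. shift M (n * P)) =
     {d + e * P | d e. d \<in> diff_coarray M \<and> e \<in> diff_coarray G}"
proof (intro equalityI subsetI)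
  fix x
  assume "x \<in> diff_coarray (\<Union>n\<in>G. shift M (n * P))"
  then obtain n1 n2 a b where "n1 \<in> G" "n2 \<in> G" "a \<in> M" "b \<in> M"
    and x: "x = (a + n1 * P) - (b + n2 * P)"
    by (auto simp: shift_def elim!: diff_coarrayE)
  then have "a - b \<in> diff_coarray M" "n1 - n2 \<in> diff_coarray G"
    by (simp_all add: diff_coarrayI)
  moreover have "x = (a - b) + (n1 - n2) * P"
    unfolding x by (simp add: algebra_simps)
  ultimately show "x \<in> {d + e * P | d e. d \<in> diff_coarray M \<and> e \<in> diff_coarray G}"
    by blast
next
  fix x
  assume "x \<in> {d + e * P | d e. d \<in> diff_coarray M \<and> e \<in> diff_coarray G}"
  then obtain a b n1 n2 where "a \<in> M" "b \<in> M" "n1 \<in> G" "n2 \<in> G"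
    and x: "x = (a - b) + (n1 - n2) * P"
    by (auto elim!: diff_coarrayE)
  then have "a + n1 * P \<in> (\<Union>n\<in>G. shift M (n * P))" "b + n2 * P \<in> (\<Union>n\<in>G. shift M (n * P))"
    by (auto simp: shift_def)
  moreover have "x = (a + n1 * P) - (b + n2 * P)"
    unfolding x by (simp add: algebra_simps)
  ultimately show "x \<in> diff_coarray (\<Union>n\<in>G. shift M (n * P))"
    by (simp add: diff_coarrayI)
qed

lemma balanced_mixed_radix_interval:
  fixes h m :: int
  assumes "0 \<le> h"
  shows "{d + e * (2*h+1) | d e. d \<in> {-h..h} \<and> e \<in> {-m..m}} =
           {-(h + m*(2*h+1))..h + m*(2*h+1)}"
proof (intro equalityI subsetI)
  fix x
  assume "x \<in> {d + e * (2*h+1) | d e. d \<in> {-h..h} \<and> e \<in> {-m..m}}"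
  then obtain d e where "x = d + e * (2*h+1)" "-h \<le> d" "d \<le> h" "-m \<le> e" "e \<le> m"
    by auto
  moreover have "-m * (2*h+1) \<le> e * (2*h+1)"
    using \<open>-m \<le> e\<close> assms by (intro mult_right_mono) simp_all
  moreover have "e * (2*h+1) \<le> m * (2*h+1)"
    using \<open>e \<le> m\<close> assms by (intro mult_right_mono) simp_all
  ultimately have "-(h + m*(2*h+1)) \<le> x" "x \<le> h + m*(2*h+1)" by linarith+
  then show "x \<in> {-(h + m*(2*h+1))..h + m*(2*h+1)}" by simp
next
  let ?P = "2*h+1"
  fix x
  assume x: "x \<in> {-(h + m*?P)..h + m*?P}"
  have P: "0 < ?P" using assms by simp
  \<comment> \<open>balanced digit: shift by \<open>h\<close>, take the ordinary remainder, shift back\<close>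
  define e where "e = (x + h) div ?P"
  define d where "d = (x + h) mod ?P - h"
  have x_eq: "x = d + e * ?P"
    unfolding d_def e_def using div_mult_mod_eq[of "x + h" ?P] by linarith
  have "0 \<le> (x + h) mod ?P" "(x + h) mod ?P < ?P"
    using P by (rule pos_mod_sign, rule pos_mod_bound)
  then have d: "-h \<le> d" "d \<le> h" unfolding d_def by auto
  have "-m * ?P < (e + 1) * ?P" "e * ?P < (m + 1) * ?P"
    using x x_eq d by (auto simp: algebra_simps)
  then have "-m < e + 1" "e < m + 1"
    using P mult_less_cancel_right_pos by blast+
  then have "e \<in> {-m..m}" by simp
  moreover have "d \<in> {-h..h}" using d by simp
  ultimately show "x \<in> {d + e * ?P | d e. d \<in> {-h..h} \<and> e \<in> {-m..m}}" using x_eq by blast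
qed

lemma diff_coarray_fractal:
  assumes "\<And>i. 1 \<le> i \<Longrightarrow> i \<le> r \<Longrightarrow> hole_free (diff_coarray (G i))"
  shows "\<exists>h\<ge>0. diff_coarray (fractal G r) = {-h..h} \<and>
           (\<Prod>i=1..r. int (card (diff_coarray (G i)))) = 2*h + 1"
  using assms
proof (induction r)
  case 0
  then show ?case by (simp add: diff_coarray_singleton)
next
  case (Suc r)
  then obtain h where "0 \<le> h" and D: "diff_coarray (fractal G r) = {-h..h}"
    and P: "(\<Prod>i=1..r. int (card (diff_coarray (G i)))) = 2*h + 1"
    by auto
  obtain m where "0 \<le> m" and Dm: "diff_coarray (G (Suc r)) = {-m..m}"
    using Suc.prems[of "Suc r"] by (auto elim: hole_free_imp_symmetric_interval)
  have "(\<Prod>i=1..r. int (card (central_ula (diff_coarray (G i))))) =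
          (\<Prod>i=1..r. int (card (diff_coarray (G i))))"
    using Suc.prems unfolding hole_free_def by (intro prod.cong) auto
  then have "diff_coarray (fractal G (Suc r)) =
               {d + e * (2*h+1) | d e. d \<in> {-h..h} \<and> e \<in> {-m..m}}"
    using P by (simp add: diff_coarray_UN_shift D Dm)
  also have "\<dots> = {-(h + m*(2*h+1))..h + m*(2*h+1)}"
    using \<open>0 \<le> h\<close> by (rule balanced_mixed_radix_interval)
  finally have D': "diff_coarray (fractal G (Suc r)) = {-(h + m*(2*h+1))..h + m*(2*h+1)}" .
  have "(\<Prod>i=1..Suc r. int (card (diff_coarray (G i)))) =
          int (card (diff_coarray (G (Suc r)))) * (\<Prod>i=1..r. int (card (diff_coarray (G i))))"
    by (rule prod.nat_ivl_Suc') simp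
  also have "\<dots> = (2*m + 1) * (2*h + 1)"
    using P Dm \<open>0 \<le> m\<close> by simp
  also have "\<dots> = 2 * (h + m*(2*h+1)) + 1"
    by (simp add: algebra_simps)
  finally have P': "(\<Prod>i=1..Suc r. int (card (diff_coarray (G i)))) = 2 * (h + m*(2*h+1)) + 1" .
  have "0 \<le> h + m*(2*h+1)"
    using \<open>0 \<le> h\<close> \<open>0 \<le> m\<close> by simp
  with D' P' show ?case by blast
qed

theorem theorem8:
  fixes G :: "nat \<Rightarrow> int set" and R :: nat
  assumes "R \<ge> 1"
    and "\<And>i. 1 \<le> i \<Longrightarrow> i \<le> R \<Longrightarrow> linear_array (G i)"
    and "\<And>i. 1 \<le> i \<Longrightarrow> i \<le> R \<Longrightarrow> hole_free (diff_coarray (G i))"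
  shows "\<forall>r. 1 \<le> r \<and> r \<le> R \<longrightarrow>
           hole_free (diff_coarray (fractal G r)) \<and>
           (let P = (\<Prod>i=1..r. int (card (diff_coarray (G i))))
            in diff_coarray (fractal G r) = {x. - (P - 1) \<le> 2 * x \<and> 2 * x \<le> P - 1})"
proof (intro allI impI)
  fix r
  assume "1 \<le> r \<and> r \<le> R"
  then obtain h where "0 \<le> h" and D: "diff_coarray (fractal G r) = {-h..h}"
    and P: "(\<Prod>i=1..r. int (card (diff_coarray (G i)))) = 2*h + 1"
    using diff_coarray_fractal[of r G] assms(3) by auto
  have "{x. - (2*h) \<le> 2 * x \<and> 2 * x \<le> 2*h} = {-h..h}" by auto
  then show "hole_free (diff_coarray (fractal G r)) \<and>
           (let P = (\<Prod>i=1..r. int (card (diff_coarray (G i))))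
            in diff_coarray (fractal G r) = {x. - (P - 1) \<le> 2 * x \<and> 2 * x \<le> P - 1})"
    using hole_free_symmetric_interval[OF \<open>0 \<le> h\<close>] D P by simp
qed

end
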